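(* Let $X$ be a complex variety, $r\geq1$, $\mathfrak a=(\mathfrak a_1,\dots,\mathfrak a_r)\in(\mathscr{E}xp\mathscr M_{\mathbf C})^r$, and let $\sum_{\mathbf m\in\mathbf N^r}\mathfrak c_{\mathbf m}\mathbf T^{\mathbf m}$ be a formal series with coefficients in $\mathscr{E}xp\mathscr M_X$ which is convergent at $\mathfrak a$, in the sense that for every $A\in\mathbf Z$ there is $\mathbf m_0\in\mathbf N^r$ such that $w_X(\mathfrak c_{\mathbf m}\mathfrak a^{\mathbf m})<A$ for all $\mathbf m\not\leq\mathbf m_0$. Let $\varepsilon\in\{0,1\}^r\setminus\{\mathbf 0\}$ and $\langle\varepsilon,\mathbf m\rangle=\sum_i\varepsilon_im_i$. Then \[\sum_{\mathbf m'\leq\mathbf m}\mathfrak c_{\mathbf m'}\mathfrak a^{\mathbf m'}\mathbf L^{-\langle\varepsilon,\mathbf m-\mathbf m'\rangle}\] tends to $0$ in $\widehat{\mathscr{E}xp\mathscr M_X}$ as $\min_{1\leq i\leq r}m_i\to\infty$ (i.e. for every $A$ its weight is $<A$ once $\min_i m_i$ is large enough). If moreover the series is $\rho$-weight-linearly convergent at $\mathfrak a$ for some $\rho\in\mathbf Z_{\geq1}^r$, then there exist $\delta>0$ and $i_0\in\mathbf N$ such that \[w_X\Big(\sum_{\mathbf m'\leq\mathbf m}\mathfrak c_{\mathbf m'}\mathfrak a^{\mathbf m'}\mathbf L^{-\langle\varepsilon,\mathbf m-\mathbf m'\rangle}\Big)<-\delta\langle\varepsilon,\mathbf m\rangle\]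 whenever $\langle\varepsilon,\mathbf m\rangle\geq i_0$.
   Context: $\mathscr{E}xp\mathscr M_X$ is the Grothendieck ring of varieties with exponentials over $X$ localised at $\mathbf L$, with Bilu's weight function $w_X:\mathscr{E}xp\mathscr M_X\to\mathbf Z\cup\{-\infty\}$ (properties: $w_X(0)=-\infty$, $w_X(\mathfrak a+\mathfrak a')\leq\max(w_X(\mathfrak a),w_X(\mathfrak a'))$, $w_X(\mathbf L^m\mathfrak a)=w_X(\mathfrak a)+2m$, submultiplicativity $w_X(\mathfrak a\mathfrak a')\le w_X(\mathfrak a)+w_X(\mathfrak a')$). $\widehat{\mathscr{E}xp\mathscr M_X}=\varprojlim_n \mathscr{E}xp\mathscr M_X/W_{\leq n}$ where $W_{\leq n}=\{\mathfrak a: w_X(\mathfrak a)\leq n\}$. On $\mathbf N^r$, $\mathbf m'\leq\mathbf m$ means $m'_i\leq m_i$ for all $i$; $\mathfrak a^{\mathbf m}=\prod_i\mathfrak a_i^{m_i}$. A series $\sum\mathfrak c_{\mathbf m}\mathbf T^{\mathbf m}$ is $\rho$-weight-linearly convergent at $\mathfrak a$ if there is $\delta>0$ with $w_X(\mathfrak c_{\mathbf m}\mathfrak a^{\mathbf m})<-\delta\langle\rho,\mathbf m\rangle$ for all $\mathbf m$ with $\langle\rho,\mathbf m\rangle=\sum_i\rho_im_i$ sufficiently large. *)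

theory Defs
  imports "HOL-Library.Extended_Real"
begin

text \<open>Abstract setting: the ring ExpM_X is modelled by a commutative ring 'x,
  with distinguished element L and its inverse Linv (localisation at L), and
  Bilu's weight function w : 'x \<Rightarrow> Z \<union> {-\<infinity>}, modelled in ereal, subject to
  exactly the properties listed in the paper.\<close>

definition weight_axioms :: "('x::comm_ring_1 \<Rightarrow> ereal) \<Rightarrow> 'x \<Rightarrow> 'x \<Rightarrow> bool" where
  "weight_axioms w L Linv \<longleftrightarrow>
     L * Linv = 1 \<and>
     (\<forall>x. w x = -\<infinity> \<or> (\<exists>n::int. w x = ereal (of_int n))) \<and>
     w 0 = -\<infinity> \<and>
     (\<forall>x y. w (x + y) \<le> max (w x) (w y)) \<and>
     (\<forall>x y. w (x * y) \<le> w x + w y) \<and>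
     (\<forall>x. w (L * x) = w x + 2) \<and>
     (\<forall>x. w (Linv * x) = w x - 2)"

definition Lpow :: "'x::comm_ring_1 \<Rightarrow> 'x \<Rightarrow> int \<Rightarrow> 'x" where
  "Lpow L Linv k = (if 0 \<le> k then L ^ nat k else Linv ^ nat (- k))"

text \<open>Multi-indices in N^r, represented as functions nat \<Rightarrow> nat vanishing from r on.\<close>
definition multi_idx :: "nat \<Rightarrow> (nat \<Rightarrow> nat) set" where
  "multi_idx r = {m. \<forall>i\<ge>r. m i = 0}"

definition mle :: "nat \<Rightarrow> (nat \<Rightarrow> nat) \<Rightarrow> (nat \<Rightarrow> nat) \<Rightarrow> bool" where
  "mle r m' m \<longleftrightarrow> (\<forall>i<r. m' i \<le> m i)"

definition pairing :: "nat \<Rightarrow> (nat \<Rightarrow> nat) \<Rightarrow> (nat \<Rightarrow> nat) \<Rightarrow> nat" where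
  "pairing r e m = (\<Sum>i<r. e i * m i)"

definition mpow :: "nat \<Rightarrow> (nat \<Rightarrow> 'x::comm_ring_1) \<Rightarrow> (nat \<Rightarrow> nat) \<Rightarrow> 'x" where
  "mpow r a m = (\<Prod>i<r. a i ^ m i)"

definition twisted_sum :: "nat \<Rightarrow> 'x::comm_ring_1 \<Rightarrow> 'x \<Rightarrow> ((nat \<Rightarrow> nat) \<Rightarrow> 'x) \<Rightarrow>
    (nat \<Rightarrow> 'x) \<Rightarrow> (nat \<Rightarrow> nat) \<Rightarrow> (nat \<Rightarrow> nat) \<Rightarrow> 'x" where
  "twisted_sum r L Linv c a eps m =
     (\<Sum>m'\<in>{m'\<in>multi_idx r. mle r m' m}.
        c m' * mpow r a m' * Lpow L Linv (- int (\<Sum>i<r. eps i * (m i - m' i))))"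

definition series_convergent_at ::
    "nat \<Rightarrow> ('x::comm_ring_1 \<Rightarrow> ereal) \<Rightarrow> ((nat \<Rightarrow> nat) \<Rightarrow> 'x) \<Rightarrow> (nat \<Rightarrow> 'x) \<Rightarrow> bool" where
  "series_convergent_at r w c a \<longleftrightarrow>
     (\<forall>A::int. \<exists>m0\<in>multi_idx r. \<forall>m\<in>multi_idx r.
        \<not> mle r m m0 \<longrightarrow> w (c m * mpow r a m) < ereal (of_int A))"

definition weight_linearly_convergent ::
    "nat \<Rightarrow> ('x::comm_ring_1 \<Rightarrow> ereal) \<Rightarrow> (nat \<Rightarrow> nat) \<Rightarrow> ((nat \<Rightarrow> nat) \<Rightarrow> 'x) \<Rightarrow> (nat \<Rightarrow> 'x) \<Rightarrow> bool" where
  "weight_linearly_convergent r w rho c a \<longleftrightarrow>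
     (\<exists>\<delta>::real>0. \<exists>K. \<forall>m\<in>multi_idx r. pairing r rho m \<ge> K \<longrightarrow>
        w (c m * mpow r a m) < ereal (- \<delta> * real (pairing r rho m)))"

end

theory Submission
  imports Defs "HOL-Library.FuncSet"
begin

text \<open>Each term of the twisted sum is c_{m'} a^{m'} shifted down in weight by
  2 <eps, m - m'>. Terms with m' outside a fixed box are small by convergence; terms with
  m' in the box have bounded weight, and the shift 2 <eps, m - m'> pushes them below any
  bound once m is large. With weight-linear convergence both estimates become linear in
  <eps, m>, using <eps, m'> \<le> <rho, m'>.\<close>

lemma finite_multi_idx_box: "finite {m'\<in>multi_idx r. mle r m' m}"
proof -
  let ?ext = "\<lambda>f i. if i < r then f i else (0::nat)"
  have "{m'\<in>multi_idx r. mle r m' m} \<subseteq> ?ext ` (PiE {..<r} (\<lambda>i. {..m i}))"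
  proof
    fix m' assume m': "m' \<in> {m'\<in>multi_idx r. mle r m' m}"
    then have "m' = ?ext (restrict m' {..<r})"
      by (auto simp: multi_idx_def fun_eq_iff)
    moreover have "restrict m' {..<r} \<in> PiE {..<r} (\<lambda>i. {..m i})"
      using m' by (auto simp: mle_def)
    ultimately show "m' \<in> ?ext ` (PiE {..<r} (\<lambda>i. {..m i}))" by blast
  qed
  moreover have "finite (PiE {..<r} (\<lambda>i. {..m i}))" by (rule finite_PiE) auto
  ultimately show ?thesis by (meson finite_imageI finite_subset)
qed

lemma pairing_ge_component: "i < r \<Longrightarrow> e i * m i \<le> pairing r e m"
  unfolding pairing_def by (rule member_le_sum) auto

lemma pairing_mono: "(\<And>i. i < r \<Longrightarrow> e i \<le> e' i) \<Longrightarrow> pairing r e m \<le> pairing r e' m"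
  unfolding pairing_def by (rule sum_mono) (simp add: mult_le_mono1)

lemma pairing_diff_add:
  assumes "mle r m' m"
  shows "pairing r e (\<lambda>i. m i - m' i) + pairing r e m' = pairing r e m"
proof -
  have "e i * (m i - m' i) + e i * m' i = e i * m i" if "i < r" for i
    using assms that by (simp add: mle_def flip: add_mult_distrib2)
  then show ?thesis by (simp add: pairing_def flip: sum.distrib)
qed

lemma finite_pairing_less:
  assumes "\<forall>i<r. rho i \<ge> 1"
  shows "finite {m'\<in>multi_idx r. pairing r rho m' < K}"
proof (rule finite_subset[OF _ finite_multi_idx_box])
  show "{m'\<in>multi_idx r. pairing r rho m' < K} \<subseteq> {m'\<in>multi_idx r. mle r m' (\<lambda>_. K)}"
  proof (clarsimp simp: mle_def)
    fix m' i assume "pairing r rho m' < K" "i < r"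
    moreover have "m' i \<le> rho i * m' i" using assms \<open>i < r\<close> by simp
    ultimately show "m' i \<le> K" using pairing_ge_component[of i r rho m'] by linarith
  qed
qed

lemma weight_cases:
  assumes "weight_axioms w L Linv"
  obtains "w x = -\<infinity>" | n :: int where "w x = ereal (of_int n)"
  using assms unfolding weight_axioms_def by blast

lemma weight_mult_Linv_power:
  assumes W: "weight_axioms w L Linv"
  shows "w (y * Linv ^ k) = w y - ereal (2 * real k)"
proof (induction k)
  case (Suc k)
  have "w (y * Linv ^ Suc k) = w (Linv * (y * Linv ^ k))" by (simp add: ac_simps)
  also have "\<dots> = w (y * Linv ^ k) - 2" using W by (simp add: weight_axioms_def)
  also have "\<dots> = w y - ereal (2 * real (Suc k))" unfolding Suc
    by (cases "w y") (auto simp: algebra_simps)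
  finally show ?case .
qed simp

lemma weight_sum_less:
  assumes W: "weight_axioms w L Linv" and "finite S"
    and "\<And>x. x \<in> S \<Longrightarrow> w (f x) < ereal B"
  shows "w (sum f S) < ereal B"
  using assms(2,3)
proof (induction S rule: finite_induct)
  case empty then show ?case using W by (simp add: weight_axioms_def)
next
  case (insert x F)
  have "w (sum f (insert x F)) \<le> max (w (f x)) (w (sum f F))"
    using insert W by (simp add: weight_axioms_def)
  also have "\<dots> < ereal B" using insert by simp
  finally show ?case .
qed

lemma weight_bounded_on_finite:
  assumes W: "weight_axioms w L Linv" and "finite S"
  shows "\<exists>B::int. \<forall>x\<in>S. w (f x) \<le> ereal (of_int B)"
  using assms(2)
proof (induction S rule: finite_induct)
  case (insert x F)
  then obtain B :: int where B: "\<forall>y\<in>F. w (f y) \<le> ereal (of_int B)" by blast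
  show ?case
  proof (cases rule: weight_cases[OF W, of "f x"])
    case 1 then show ?thesis using B by auto
  next
    case (2 n)
    then have "\<forall>y\<in>insert x F. w (f y) \<le> ereal (of_int (max B n))"
      using B by (auto intro: order_trans)
    then show ?thesis by blast
  qed
qed simp

lemma Lpow_neg_int: "Lpow L Linv (- int n) = Linv ^ n"
  by (simp add: Lpow_def)

lemma twisted_sum_eq:
  "twisted_sum r L Linv c a eps m =
     (\<Sum>m'\<in>{m'\<in>multi_idx r. mle r m' m}.
        c m' * mpow r a m' * Linv ^ pairing r eps (\<lambda>i. m i - m' i))"
  by (simp only: twisted_sum_def pairing_def Lpow_neg_int)

text \<open>Terms of weight -\<infinity> stay at -\<infinity> after the shift, so only integer weights
  need to be checked.\<close>
lemma weight_twisted_sum_less: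
  assumes W: "weight_axioms w L Linv"
    and terms: "\<And>m' n. m' \<in> multi_idx r \<Longrightarrow> mle r m' m \<Longrightarrow>
        w (c m' * mpow r a m') = ereal (of_int n) \<Longrightarrow>
        of_int n - 2 * real (pairing r eps (\<lambda>i. m i - m' i)) < X"
  shows "w (twisted_sum r L Linv c a eps m) < ereal X"
  unfolding twisted_sum_eq
proof (rule weight_sum_less[OF W finite_multi_idx_box])
  fix m' assume m': "m' \<in> {m'\<in>multi_idx r. mle r m' m}"
  let ?E = "pairing r eps (\<lambda>i. m i - m' i)"
  have shift: "w (c m' * mpow r a m' * Linv ^ ?E) = w (c m' * mpow r a m') - ereal (2 * real ?E)"
    by (rule weight_mult_Linv_power[OF W])
  show "w (c m' * mpow r a m' * Linv ^ ?E) < ereal X"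
  proof (cases rule: weight_cases[OF W, of "c m' * mpow r a m'"])
    case 1 then show ?thesis using shift by simp
  next
    case (2 n) then show ?thesis using shift terms[of m' n] m' by simp
  qed
qed

lemma twisted_sum_tendsto_zero:
  assumes W: "weight_axioms w L Linv"
    and conv: "series_convergent_at r w c a"
    and j: "j < r" "eps j \<noteq> 0"
  shows "\<exists>N::nat. \<forall>m\<in>multi_idx r. (\<forall>i<r. N \<le> m i) \<longrightarrow>
           w (twisted_sum r L Linv c a eps m) < ereal (of_int A)"
proof -
  obtain m0 where small: "\<forall>m\<in>multi_idx r. \<not> mle r m m0 \<longrightarrow> w (c m * mpow r a m) < ereal (of_int A)"
    using conv by (auto simp: series_convergent_at_def)
  obtain B :: int where B: "\<forall>m'\<in>{m'\<in>multi_idx r. mle r m' m0}. w (c m' * mpow r a m') \<le> ereal (of_int B)"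
    using weight_bounded_on_finite[OF W finite_multi_idx_box, where f = "\<lambda>m'. c m' * mpow r a m'"]
    by blast
  define N where "N = nat (B - A) + 1 + m0 j"
  have "w (twisted_sum r L Linv c a eps m) < ereal (of_int A)"
    if large: "\<forall>i<r. N \<le> m i" for m
  proof (rule weight_twisted_sum_less[OF W])
    fix m' n assume m': "m' \<in> multi_idx r" "mle r m' m"
      and n: "w (c m' * mpow r a m') = ereal (of_int n)"
    let ?E = "pairing r eps (\<lambda>i. m i - m' i)"
    show "of_int n - 2 * real ?E < of_int A"
    proof (cases "mle r m' m0")
      case True
      have "n \<le> B" using B m' True n by auto
      have "m j - m' j \<le> eps j * (m j - m' j)" using j by simp
      also have "\<dots> \<le> ?E" using pairing_ge_component[OF j(1), of eps "\<lambda>i. m i - m' i"] by simp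
      finally have "m j - m' j \<le> ?E" .
      moreover have "m' j \<le> m0 j" "N \<le> m j" using True large j by (auto simp: mle_def)
      ultimately have "nat (B - A) + 1 \<le> ?E" unfolding N_def by linarith
      then show ?thesis using \<open>n \<le> B\<close> by linarith
    next
      case False
      then show ?thesis using small m' n by auto
    qed
  qed
  then show ?thesis by blast
qed

lemma twisted_sum_weight_linear_decay:
  assumes W: "weight_axioms w L Linv"
    and rho: "\<forall>i<r. rho i \<ge> 1" and eps_rho: "\<forall>i<r. eps i \<le> rho i"
    and lin: "weight_linearly_convergent r w rho c a"
  shows "\<exists>\<delta>::real>0. \<exists>i0::nat. \<forall>m\<in>multi_idx r. pairing r eps m \<ge> i0 \<longrightarrow>
           w (twisted_sum r L Linv c a eps m) < ereal (- \<delta> * real (pairing r eps m))"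
proof -
  obtain \<delta> :: real and K where "\<delta> > 0"
    and decay: "\<forall>m\<in>multi_idx r. pairing r rho m \<ge> K \<longrightarrow>
        w (c m * mpow r a m) < ereal (- \<delta> * real (pairing r rho m))"
    using lin by (auto simp: weight_linearly_convergent_def)
  obtain B :: int where B: "\<forall>m'\<in>{m'\<in>multi_idx r. pairing r rho m' < K}.
      w (c m' * mpow r a m') \<le> ereal (of_int B)"
    using weight_bounded_on_finite[OF W finite_pairing_less[OF rho], where f = "\<lambda>m'. c m' * mpow r a m'"]
    by blast
  define d where "d = min \<delta> 1"
  have d: "0 < d" "d \<le> \<delta>" "d \<le> 1" using \<open>\<delta> > 0\<close> by (auto simp: d_def)
  have "w (twisted_sum r L Linv c a eps m) < ereal (- d * real (pairing r eps m))"
    if large: "pairing r eps m \<ge> nat B + 2 * K + 1" for m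
  proof (rule weight_twisted_sum_less[OF W])
    fix m' n assume m': "m' \<in> multi_idx r" "mle r m' m"
      and n: "w (c m' * mpow r a m') = ereal (of_int n)"
    let ?E = "pairing r eps (\<lambda>i. m i - m' i)"
    have split: "real ?E + real (pairing r eps m') = real (pairing r eps m)"
      using pairing_diff_add[OF m'(2)] by (metis of_nat_add)
    have eps_le_rho: "pairing r eps m' \<le> pairing r rho m'"
      using eps_rho by (simp add: pairing_mono)
    show "of_int n - 2 * real ?E < - d * real (pairing r eps m)"
    proof (cases "K \<le> pairing r rho m'")
      case True
      then have "of_int n < - \<delta> * real (pairing r rho m')" using decay m' n by fastforce
      moreover have "d * real (pairing r eps m') \<le> \<delta> * real (pairing r rho m')"
        using d eps_le_rho by (intro mult_mono) auto
      moreover have "d * real ?E \<le> 2 * real ?E" using d by (simp add: mult_right_mono)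
      ultimately show ?thesis using split by (simp add: algebra_simps flip: split)
    next
      case False
      then have "n \<le> B" using B m' n by auto
      moreover have "pairing r eps m' < K" using False eps_le_rho by linarith
      moreover have "d * real (pairing r eps m) \<le> real (pairing r eps m)"
        using d by (simp add: mult_left_le_one_le)
      moreover have "real_of_int B \<le> real (nat B)" by linarith
      ultimately show ?thesis using split large by linarith
    qed
  qed
  then show ?thesis using d by blast
qed

theorem lemma2p2:
  fixes w :: "'x::comm_ring_1 \<Rightarrow> ereal" and L Linv :: 'x
    and r :: nat and a :: "nat \<Rightarrow> 'x" and c :: "(nat \<Rightarrow> nat) \<Rightarrow> 'x"
    and eps :: "nat \<Rightarrow> nat"
  assumes W: "weight_axioms w L Linv"
    and r: "r \<ge> 1"
    and conv: "series_convergent_at r w c a"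
    and eps01: "\<forall>i<r. eps i \<in> {0, 1}"
    and eps_nz: "\<exists>i<r. eps i \<noteq> 0"
  shows "(\<forall>A::int. \<exists>N::nat. \<forall>m\<in>multi_idx r. (\<forall>i<r. N \<le> m i) \<longrightarrow>
            w (twisted_sum r L Linv c a eps m) < ereal (of_int A))
       \<and> (\<forall>rho. (\<forall>i<r. rho i \<ge> 1) \<longrightarrow> weight_linearly_convergent r w rho c a \<longrightarrow>
            (\<exists>\<delta>::real>0. \<exists>i0::nat. \<forall>m\<in>multi_idx r. pairing r eps m \<ge> i0 \<longrightarrow>
               w (twisted_sum r L Linv c a eps m) < ereal (- \<delta> * real (pairing r eps m))))"
proof (intro conjI allI impI)
  fix A :: int
  obtain j where "j < r" "eps j \<noteq> 0" using eps_nz by blast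
  then show "\<exists>N::nat. \<forall>m\<in>multi_idx r. (\<forall>i<r. N \<le> m i) \<longrightarrow>
      w (twisted_sum r L Linv c a eps m) < ereal (of_int A)"
    using twisted_sum_tendsto_zero[OF W conv] by blast
next
  fix rho :: "nat \<Rightarrow> nat"
  assume rho: "\<forall>i<r. rho i \<ge> 1" and lin: "weight_linearly_convergent r w rho c a"
  have "\<forall>i<r. eps i \<le> rho i" using eps01 rho by fastforce
  then show "\<exists>\<delta>::real>0. \<exists>i0::nat. \<forall>m\<in>multi_idx r. pairing r eps m \<ge> i0 \<longrightarrow>
      w (twisted_sum r L Linv c a eps m) < ereal (- \<delta> * real (pairing r eps m))"
    using twisted_sum_weight_linear_decay[OF W rho _ lin] by blast
qed

end
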